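(* For every $d$-dimensional state $\rho$, every $\epsilon>0$ and every real-valued function $f$ on the set of probability distributions on $[d]$, \[ \min_{q\in V_\epsilon(\delta_\rho)}f(q)\le\min_{\sigma\in V_\epsilon(\rho)}f(\delta_\sigma)\le\min_{q\in V_{\epsilon^2/4}(\delta_\rho)}f(q). \]
   Context: Fixed computational basis; $\Pi_I=\sum_{i\in I}|i\rangle\langle i|$. For a state $\omega$, $\delta_\omega\in\mathbb R^d$ is its diagonal, $(\delta_\omega)_j=\omega_{jj}$. Quantum set: $V_\epsilon(\rho)=\{\Pi_I\rho\Pi_I/\mathrm{Tr}[\rho\Pi_I]:\ I\subseteq[d]\}\cap\{\sigma:\|\sigma-\rho\|_1\le\epsilon\}$ (only $I$ with $\mathrm{Tr}[\rho\Pi_I]>0$). Classical set for a probability vector $p\in\mathbb R^d$: $V_\epsilon(p)=\{\Pi_Ip/\sum_{i\in I}p_i:\ I\subseteq[d]\}\cap\{q:|q-p|_1\le\epsilon\}$ (only $I$ with $\sum_{i\in I}p_i>0$), $|\cdot|_1$ the $\ell_1$ norm and $\Pi_Ip$ the vector keeping the entries of $p$ indexed by $I$ and zeroing the others. *)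

theory Defs
  imports "HOL-Analysis.Analysis"
begin

text \<open>Matrices on C^d are type-indexed: complex^'d^'d with 'd a finite type, [d] = UNIV.\<close>

definition adj :: "complex^'d^'d \<Rightarrow> complex^'d^'d" where
  "adj A = (\<chi> i j. cnj (A $ j $ i))"

definition mtrace :: "complex^'d^'d \<Rightarrow> complex" where
  "mtrace A = (\<Sum>i\<in>UNIV. A $ i $ i)"

definition hermitian :: "complex^'d^'d \<Rightarrow> bool" where
  "hermitian A \<longleftrightarrow> adj A = A"

definition psd :: "complex^'d^'d \<Rightarrow> bool" where
  "psd A \<longleftrightarrow> hermitian A \<and>
     (\<forall>x::complex^'d. let v = (\<Sum>i\<in>UNIV. cnj (x $ i) * (A *v x) $ i) in Im v = 0 \<and> 0 \<le> Re v)"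

definition density :: "complex^'d^'d \<Rightarrow> bool" where
  "density A \<longleftrightarrow> psd A \<and> mtrace A = 1"

definition unitary :: "complex^'d^'d \<Rightarrow> bool" where
  "unitary U \<longleftrightarrow> adj U ** U = mat 1"

definition rdiag :: "real^'d \<Rightarrow> complex^'d^'d" where
  "rdiag s = (\<chi> i j. if i = j then complex_of_real (s $ i) else 0)"

definition trace_norm :: "complex^'d^'d \<Rightarrow> real" where
  "trace_norm A = (SOME t. \<exists>U V s. unitary U \<and> unitary V \<and> (\<forall>i. 0 \<le> s $ i)
      \<and> A = U ** rdiag s ** adj V \<and> t = (\<Sum>i\<in>UNIV. s $ i))"

definition proj :: "'d set \<Rightarrow> complex^'d^'d" where
  "proj I = (\<chi> i j. if i = j \<and> i \<in> I then 1 else 0)"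

definition diagv :: "complex^'d^'d \<Rightarrow> real^'d" where
  "diagv A = (\<chi> j. Re (A $ j $ j))"

definition Vq :: "real \<Rightarrow> complex^'d^'d \<Rightarrow> (complex^'d^'d) set" where
  "Vq eps \<rho> = {\<sigma>. \<exists>I. 0 < Re (mtrace (\<rho> ** proj I)) \<and>
        \<sigma> = (\<chi> i j. (proj I ** \<rho> ** proj I) $ i $ j / mtrace (\<rho> ** proj I))}
     \<inter> {\<sigma>. trace_norm (\<sigma> - \<rho>) \<le> eps}"

definition Vc :: "real \<Rightarrow> real^'d \<Rightarrow> (real^'d) set" where
  "Vc eps p = {q. \<exists>I. 0 < (\<Sum>i\<in>I. p $ i) \<and>
        q = (\<chi> i. if i \<in> I then p $ i / (\<Sum>k\<in>I. p $ k) else 0)}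
     \<inter> {q. (\<Sum>i\<in>UNIV. \<bar>q $ i - p $ i\<bar>) \<le> eps}"

end

theory Submission
  imports Defs
begin

(*
  A post-measurement state \<Pi>\<^sub>I \<rho> \<Pi>\<^sub>I / Tr[\<rho> \<Pi>\<^sub>I] has as diagonal exactly the conditioning of
  \<delta>\<^sub>\<rho> on I, so taking diagonals maps the quantum candidates onto classical candidates, and both
  minima are minima of f over sets of such conditionals. The first inequality holds because the
  l1-distance of the diagonals of a Hermitian matrix is at most its trace norm. For the second,
  the conditioning on I is at l1-distance 2(1 - t) from \<delta>\<^sub>\<rho>, t = Tr[\<rho> \<Pi>\<^sub>I], and a
  gentle-measurement estimate bounds the trace distance of the post-measurement state by
  2(1 - t) + 2 sqrt (t (1 - t)) (and trivially by 2), which is at most \<epsilon> once 8(1 - t) \<le> \<epsilon>\<^sup>2.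
  The estimate splits \<sigma> - \<rho> into blocks \<Pi>\<^sub>J \<rho> \<Pi>\<^sub>K and applies Cauchy-Schwarz for the form
  of \<rho>. Since the trace norm is defined through a singular value decomposition, we also need
  the spectral theorem for Hermitian matrices, proved by maximising the Rayleigh quotient.
*)

definition cinner :: "complex^'n \<Rightarrow> complex^'n \<Rightarrow> complex" where
  "cinner x y = (\<Sum>i\<in>UNIV. cnj (x $ i) * y $ i)"

lemma cinner_commute: "cinner y x = cnj (cinner x y)"
  by (simp add: cinner_def cnj_sum mult.commute)

lemma cinner_adj: "cinner x (A *v y) = cinner (adj A *v x) y"
proof -
  have "cinner x (A *v y) = (\<Sum>i\<in>UNIV. \<Sum>j\<in>UNIV. cnj (x $ i) * A $ i $ j * y $ j)"
    unfolding cinner_def matrix_vector_mult_def by (simp add: sum_distrib_left mult_ac)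
  also have "\<dots> = (\<Sum>j\<in>UNIV. \<Sum>i\<in>UNIV. cnj (x $ i) * A $ i $ j * y $ j)"
    by (rule sum.swap)
  also have "\<dots> = cinner (adj A *v x) y"
    unfolding cinner_def matrix_vector_mult_def adj_def
    by (simp add: sum_distrib_left sum_distrib_right cnj_sum mult_ac)
  finally show ?thesis .
qed

lemma cinner_hermitian: "hermitian A \<Longrightarrow> cinner x (A *v y) = cinner (A *v x) y"
  using cinner_adj[of x A y] by (simp add: hermitian_def)

lemma cinner_add_right: "cinner x (y + z) = cinner x y + cinner x z"
  by (simp add: cinner_def sum.distrib algebra_simps)

lemma cinner_add_left: "cinner (x + y) z = cinner x z + cinner y z"
  by (simp add: cinner_def sum.distrib algebra_simps)

lemma cinner_diff_right: "cinner x (y - z) = cinner x y - cinner x z"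
  by (simp add: cinner_def sum_subtractf algebra_simps)

lemma cinner_scaleR_right: "cinner x (r *\<^sub>R y) = of_real r * cinner x y"
  unfolding cinner_def sum_distrib_left
  by (intro sum.cong refl) (simp add: scaleR_conv_of_real[where 'a=complex])

lemma cinner_scaleR_left: "cinner (r *\<^sub>R x) y = of_real r * cinner x y"
  unfolding cinner_def sum_distrib_left
  by (intro sum.cong refl) (simp add: scaleR_conv_of_real[where 'a=complex])

lemma cinner_scaleC_right: "cinner x (c *s y) = c * cinner x y"
  by (simp add: cinner_def sum_distrib_left algebra_simps)

lemma cinner_scaleC_left: "cinner (c *s x) y = cnj c * cinner x y"
  by (simp add: cinner_def sum_distrib_left algebra_simps)

lemma cinner_self: "cinner x x = of_real ((norm x)\<^sup>2)"
proof -
  have "cinner x x = (\<Sum>i\<in>UNIV. of_real ((cmod (x $ i))\<^sup>2))"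
    unfolding cinner_def by (intro sum.cong refl) (metis complex_norm_square mult.commute of_real_power)
  also have "\<dots> = of_real ((norm x)\<^sup>2)"
    by (simp add: norm_vec_def L2_set_def sum_nonneg)
  finally show ?thesis .
qed

lemma cinner_self_eq_0_iff: "cinner x x = 0 \<longleftrightarrow> x = 0"
  by (simp add: cinner_self)

lemma cinner_hermitian_real: "hermitian A \<Longrightarrow> cinner x (A *v x) = of_real (Re (cinner x (A *v x)))"
  by (metis cinner_hermitian cinner_commute complex_is_Real_iff Reals_cnj_iff of_real_Re)

lemma continuous_on_cinner_right: "continuous_on S (cinner w)"
  unfolding cinner_def by (intro continuous_intros continuous_on_component continuous_on_id)

lemma continuous_on_quadratic_form: "continuous_on S (\<lambda>x. Re (cinner x (A *v x)))"
  unfolding cinner_def matrix_vector_mult_def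
  by (simp, intro continuous_intros continuous_on_component continuous_on_id)

lemma cmatrix_vector_mult_scaleR: "(A::complex^'n^'m) *v (r *\<^sub>R y) = r *\<^sub>R (A *v y)"
  by (simp add: vec_eq_iff matrix_vector_mult_def scaleR_sum_right)

lemma scaleR_cmatrix_vector_mult: "(r *\<^sub>R (A::complex^'n^'m)) *v x = r *\<^sub>R (A *v x)"
  by (simp add: vec_eq_iff matrix_vector_mult_def scaleR_sum_right)

section \<open>Spectral theorem for Hermitian matrices\<close>

lemma linear_coeff_zero_if_quadratic_nonpos:
  fixes a c :: real
  assumes "\<And>t. 2 * t * a + t\<^sup>2 * c \<le> 0"
  shows "a = 0"
proof (rule ccontr)
  assume a: "a \<noteq> 0"
  define k where "k = \<bar>c\<bar> + 1"
  have k: "k > 0" by (simp add: k_def)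
  have "2 * (a / k) * a + (a / k)\<^sup>2 * c \<le> 0" by (rule assms)
  hence "(2 * (a / k) * a + (a / k)\<^sup>2 * c) * k\<^sup>2 \<le> 0"
    by (simp add: mult_nonpos_nonneg)
  also have "(2 * (a / k) * a + (a / k)\<^sup>2 * c) * k\<^sup>2 = a\<^sup>2 * (2 * k + c)"
    using k by (simp add: field_simps power2_eq_square)
  finally have "a\<^sup>2 * (2 * k + c) \<le> 0" .
  moreover have "a\<^sup>2 * (2 * k + c) > 0"
    using a unfolding k_def by (intro mult_pos_pos) (auto simp: abs_if split: if_splits)
  ultimately show False by linarith
qed

lemma exists_nonzero_orthogonal:
  fixes v :: "'j \<Rightarrow> complex^'d"
  assumes "finite J" and "card J < CARD('d)"
  shows "\<exists>z. z \<noteq> 0 \<and> (\<forall>j\<in>J. cinner (v j) z = 0)"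
proof -
  define S where "S = v ` J \<union> (\<lambda>j. \<i> *s v j) ` J"
  have "finite S" using assms(1) by (simp add: S_def)
  have "card S \<le> card (v ` J) + card ((\<lambda>j. \<i> *s v j) ` J)" unfolding S_def by (rule card_Un_le)
  also have "\<dots> \<le> card J + card J" by (intro add_mono card_image_le assms(1))
  finally have "card S < DIM(complex^'d)" using assms(2) by simp
  have "span S \<noteq> UNIV"
  proof
    assume "span S = UNIV"
    hence "dim S = DIM(complex^'d)" by (metis dim_UNIV dim_span)
    moreover have "dim S \<le> card S" using \<open>finite S\<close> by (intro dim_le_card) (auto intro: span_base)
    ultimately show False using \<open>card S < DIM(complex^'d)\<close> by simp
  qed
  then obtain a where a: "a \<noteq> 0" "\<forall>x\<in>span S. a \<bullet> x = 0" using span_not_UNIV_orthogonal by blast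
  \<comment> \<open>The real inner product on \<open>complex^'d\<close> sees the real and imaginary parts of \<open>cinner\<close>.\<close>
  have re: "a \<bullet> w = Re (cinner w a)" and im: "a \<bullet> (\<i> *s w) = Im (cinner w a)" for w :: "complex^'d"
    by (simp_all add: inner_vec_def cinner_def inner_complex_def Re_sum Im_sum algebra_simps)
  have "cinner (v j) a = 0" if "j \<in> J" for j
  proof -
    have "v j \<in> span S" "\<i> *s v j \<in> span S" using that by (auto simp: S_def intro: span_base)
    hence "Re (cinner (v j) a) = 0" "Im (cinner (v j) a) = 0" using a(2) re im by metis+
    thus ?thesis by (simp add: complex_eq_iff)
  qed
  thus ?thesis using a(1) by blast
qed

lemma hermitian_rayleigh_max_exists:
  fixes A :: "complex^'d^'d" and v :: "'j \<Rightarrow> complex^'d"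
  assumes "finite J" and "card J < CARD('d)"
  obtains x where "cinner x x = 1" and "\<forall>j\<in>J. cinner (v j) x = 0"
    and "\<And>y. \<forall>j\<in>J. cinner (v j) y = 0 \<Longrightarrow>
           Re (cinner y (A *v y)) \<le> Re (cinner x (A *v x)) * Re (cinner y y)"
proof -
  define W where "W = {y. \<forall>j\<in>J. cinner (v j) y = 0}"
  define K where "K = W \<inter> sphere 0 1"
  define g where "g x = Re (cinner x (A *v x))" for x
  obtain z where z: "z \<noteq> 0" "z \<in> W" using exists_nonzero_orthogonal[OF assms] unfolding W_def by blast
  have "(1 / norm z) *\<^sub>R z \<in> K" using z by (simp add: K_def W_def cinner_scaleR_right)
  hence "K \<noteq> {}" by blast
  moreover have "compact K"
  proof -
    have "W = (\<Inter>j\<in>J. {x. cinner (v j) x = 0})" by (auto simp: W_def)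
    moreover have "closed (\<Inter>j\<in>J. {x. cinner (v j) x = 0})"
      by (intro closed_INT ballI closed_Collect_eq continuous_on_cinner_right continuous_on_const)
    ultimately have "closed W" by simp
    thus ?thesis by (simp add: K_def closed_Int_compact)
  qed
  ultimately obtain x where x: "x \<in> K" and max: "\<And>y. y \<in> K \<Longrightarrow> g y \<le> g x"
    using continuous_attains_sup[OF _ _ continuous_on_quadratic_form[of K A]] unfolding g_def by blast
  have "Re (cinner y (A *v y)) \<le> g x * Re (cinner y y)" if "y \<in> W" for y
  proof (cases "y = 0")
    case True thus ?thesis by (simp add: cinner_def)
  next
    case False
    have "(1 / norm y) *\<^sub>R y \<in> K" using that False by (simp add: K_def W_def cinner_scaleR_right)
    hence "g ((1 / norm y) *\<^sub>R y) \<le> g x" by (rule max)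
    moreover have "g ((1 / norm y) *\<^sub>R y) = Re (cinner y (A *v y)) / (norm y)\<^sup>2"
      by (simp add: g_def cmatrix_vector_mult_scaleR cinner_scaleR_left cinner_scaleR_right
          power2_eq_square)
    moreover have "Re (cinner y y) = (norm y)\<^sup>2" by (simp add: cinner_self)
    ultimately show ?thesis using False by (simp add: divide_le_eq mult.commute)
  qed
  moreover have "cinner x x = 1" using x by (simp add: K_def cinner_self)
  ultimately show ?thesis using that x by (auto simp: K_def W_def g_def)
qed

lemma hermitian_rayleigh_max_orthogonal:
  fixes A :: "complex^'d^'d"
  assumes herm: "hermitian A" and unit: "cinner x x = 1" and "x \<in> W"
    and add: "\<And>y z. y \<in> W \<Longrightarrow> z \<in> W \<Longrightarrow> y + z \<in> W"
    and scale: "\<And>c y. y \<in> W \<Longrightarrow> c *s y \<in> W"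
    and max: "\<And>y. y \<in> W \<Longrightarrow> Re (cinner y (A *v y)) \<le> Re (cinner x (A *v x)) * Re (cinner y y)"
    and "y \<in> W" and "cinner x y = 0"
  shows "cinner y (A *v x) = 0"
proof -
  define l where "l = Re (cinner x (A *v x))"
  have re0: "Re (cinner z (A *v x)) = 0" if "z \<in> W" "cinner x z = 0" for z
  proof -
    define w where "w = cinner z (A *v x)"
    have "2 * t * Re w + t\<^sup>2 * (Re (cinner z (A *v z)) - l * Re (cinner z z)) \<le> 0" for t
    proof -
      define zt where "zt = x + of_real t *s z"
      have "zt \<in> W" using \<open>x \<in> W\<close> that(1) by (simp add: zt_def add scale)
      hence bound: "Re (cinner zt (A *v zt)) \<le> l * Re (cinner zt zt)" by (simp add: max l_def)
      have "cinner x (A *v z) = cnj w"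
        using cinner_hermitian[OF herm, of x z] cinner_commute[of "A *v x" z] by (simp add: w_def)
      moreover have "cinner zt (A *v zt) = cinner x (A *v x) + of_real t * cinner x (A *v z)
          + of_real t * w + of_real t * of_real t * cinner z (A *v z)"
        by (simp add: zt_def w_def matrix_vector_right_distrib vector_scalar_commute
            cinner_add_left cinner_add_right cinner_scaleC_left cinner_scaleC_right distrib_left)
      ultimately have "Re (cinner zt (A *v zt)) = l + 2 * t * Re w + t\<^sup>2 * Re (cinner z (A *v z))"
        by (simp add: l_def power2_eq_square)
      moreover have "cinner zt zt = 1 + of_real t * of_real t * cinner z z"
        using that(2) cinner_commute[of z x] unit
        by (simp add: zt_def cinner_add_left cinner_add_right cinner_scaleC_left cinner_scaleC_right)
      hence "Re (cinner zt zt) = 1 + t\<^sup>2 * Re (cinner z z)" by (simp add: power2_eq_square)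
      ultimately show ?thesis using bound by (simp add: algebra_simps)
    qed
    thus ?thesis using linear_coeff_zero_if_quadratic_nonpos w_def by blast
  qed
  have "Re (cinner (\<i> *s y) (A *v x)) = 0"
    using assms(7,8) by (intro re0 scale) (simp_all add: cinner_scaleC_right)
  hence "Im (cinner y (A *v x)) = 0" by (simp add: cinner_scaleC_left)
  moreover have "Re (cinner y (A *v x)) = 0" using re0 assms(7,8) by blast
  ultimately show ?thesis by (simp add: complex_eq_iff)
qed

lemma hermitian_eigenvector_orthogonal:
  fixes A :: "complex^'d^'d" and v :: "'j \<Rightarrow> complex^'d"
  assumes herm: "hermitian A" and "finite J" and "card J < CARD('d)"
    and eig: "\<And>j. j \<in> J \<Longrightarrow> \<exists>\<mu>::real. A *v v j = \<mu> *\<^sub>R v j"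
  shows "\<exists>x. cinner x x = 1 \<and> (\<forall>j\<in>J. cinner (v j) x = 0) \<and> (\<exists>\<mu>::real. A *v x = \<mu> *\<^sub>R x)"
proof -
  define W where "W = {y. \<forall>j\<in>J. cinner (v j) y = 0}"
  obtain x where unit: "cinner x x = 1" and "x \<in> W"
    and max: "\<And>y. y \<in> W \<Longrightarrow> Re (cinner y (A *v y)) \<le> Re (cinner x (A *v x)) * Re (cinner y y)"
    using hermitian_rayleigh_max_exists[OF assms(2,3), of v A] unfolding W_def mem_Collect_eq by metis
  define l where "l = Re (cinner x (A *v x))"
  define r where "r = A *v x - l *\<^sub>R x"
  \<comment> \<open>\<open>W\<close> is \<open>A\<close>-invariant since the \<open>v j\<close> are eigenvectors, so the residual \<open>r\<close> lies in \<open>W\<close>.\<close>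
  have "cinner (v j) r = 0" if "j \<in> J" for j
  proof -
    obtain m :: real where m: "A *v v j = m *\<^sub>R v j" using eig \<open>j \<in> J\<close> by blast
    have "cinner (v j) x = 0" using \<open>x \<in> W\<close> that by (simp add: W_def)
    moreover have "cinner (v j) (A *v x) = of_real m * cinner (v j) x"
      by (simp add: cinner_hermitian[OF herm] m cinner_scaleR_left)
    ultimately show ?thesis by (simp add: r_def cinner_diff_right cinner_scaleR_right)
  qed
  hence "r \<in> W" by (simp add: W_def)
  have "cinner x (A *v x) = of_real l"
    unfolding l_def by (rule cinner_hermitian_real[OF herm])
  hence "cinner x r = 0" using unit by (simp add: r_def cinner_diff_right cinner_scaleR_right)
  moreover note \<open>r \<in> W\<close>
  ultimately have "cinner r (A *v x) = 0"
    using hermitian_rayleigh_max_orthogonal[OF herm unit \<open>x \<in> W\<close> _ _ max]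
    by (simp add: W_def cinner_add_right cinner_scaleC_right)
  moreover have "cinner r (l *\<^sub>R x) = 0"
    using \<open>cinner x r = 0\<close> cinner_commute[of r x] by (simp add: cinner_scaleR_right)
  ultimately have "cinner r r = 0" by (simp add: r_def cinner_diff_right)
  hence "A *v x = l *\<^sub>R x" by (simp add: r_def cinner_self_eq_0_iff)
  thus ?thesis using unit \<open>x \<in> W\<close> unfolding W_def by blast
qed

lemma hermitian_orthonormal_eigenvectors:
  fixes A :: "complex^'d^'d" and J :: "'d set"
  assumes herm: "hermitian A"
  shows "\<exists>v. (\<forall>j\<in>J. \<forall>k\<in>J. cinner (v j) (v k) = (if j = k then 1 else 0))
          \<and> (\<forall>j\<in>J. \<exists>\<mu>::real. A *v v j = \<mu> *\<^sub>R v j)"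
  using finite[of J]
proof (induction J rule: finite_induct)
  case empty thus ?case by auto
next
  case (insert a J)
  then obtain v where orthonormal: "\<forall>j\<in>J. \<forall>k\<in>J. cinner (v j) (v k) = (if j = k then 1 else 0)"
      and eigen: "\<forall>j\<in>J. \<exists>\<mu>::real. A *v v j = \<mu> *\<^sub>R v j" by blast
  have "J \<subset> UNIV" using insert(2) by blast
  hence "card J < CARD('d)" by (simp add: psubset_card_mono)
  then obtain x where "cinner x x = 1" "\<forall>j\<in>J. cinner (v j) x = 0" "\<exists>\<mu>::real. A *v x = \<mu> *\<^sub>R x"
    using hermitian_eigenvector_orthogonal[OF herm insert(1)] eigen by blast
  moreover from this(2) have "\<forall>j\<in>J. cinner x (v j) = 0" using cinner_commute[of x] by simp
  ultimately show ?case
    using orthonormal eigen insert(2) by (intro exI[of _ "v(a := x)"]) auto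
qed

lemma matrix_add_rdistrib: "(A + B) ** C = A ** C + B ** (C::'a::semiring_1^'n^'m)"
  by (simp add: vec_eq_iff matrix_matrix_mult_def sum.distrib distrib_right)

lemma adj_mult: "adj (A ** B) = adj B ** adj A"
  by (simp add: vec_eq_iff adj_def matrix_matrix_mult_def cnj_sum mult.commute)

lemma adj_adj [simp]: "adj (adj A) = A"
  by (simp add: vec_eq_iff adj_def)

lemma adj_diff: "adj (A - B) = adj A - adj B"
  by (simp add: vec_eq_iff adj_def)

lemma adj_scaleR: "adj (r *\<^sub>R A) = r *\<^sub>R adj A"
  by (simp add: vec_eq_iff adj_def scaleR_conv_of_real[where 'a=complex])

lemma adj_rdiag [simp]: "adj (rdiag s) = rdiag s"
  by (simp add: vec_eq_iff adj_def rdiag_def)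

lemma rdiag_mult: "rdiag a ** rdiag b = rdiag (a * b)"
  by (simp add: vec_eq_iff rdiag_def matrix_matrix_mult_def if_distrib[where f="\<lambda>x. _ * x"]
      sum.delta' cong: if_cong)

lemma rdiag_1: "rdiag 1 = mat 1"
  by (simp add: vec_eq_iff rdiag_def mat_def)

lemma unitary_mult_adj: "unitary U \<Longrightarrow> U ** adj U = mat 1"
  unfolding unitary_def using matrix_left_right_inverse by blast

lemma hermitian_spectral_decomposition:
  fixes A :: "complex^'d^'d"
  assumes "hermitian A"
  shows "\<exists>U m. unitary U \<and> A = U ** rdiag m ** adj U"
proof -
  obtain v :: "'d \<Rightarrow> complex^'d"
    where orthonormal: "\<And>j k. cinner (v j) (v k) = (if j = k then 1 else 0)"
      and "\<forall>j. \<exists>\<mu>::real. A *v v j = \<mu> *\<^sub>R v j"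
    using hermitian_orthonormal_eigenvectors[OF assms, of UNIV] by auto
  then obtain mu where eigen: "\<And>j. A *v v j = mu j *\<^sub>R v j" by metis
  define U :: "complex^'d^'d" where "U = (\<chi> i k. v k $ i)"
  define m :: "real^'d" where "m = (\<chi> k. mu k)"
  have "(adj U ** U) $ j $ k = mat 1 $ j $ k" for j k
    using orthonormal[of j k] by (simp add: adj_def U_def matrix_matrix_mult_def mat_def cinner_def)
  hence "unitary U" by (simp add: unitary_def vec_eq_iff)
  have "(A ** U) $ i $ k = (U ** rdiag m) $ i $ k" for i k
  proof -
    have "(A ** U) $ i $ k = (A *v v k) $ i"
      by (simp add: U_def matrix_matrix_mult_def matrix_vector_mult_def)
    also have "\<dots> = v k $ i * of_real (mu k)" by (simp add: eigen scaleR_conv_of_real[where 'a=complex])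
    also have "\<dots> = (U ** rdiag m) $ i $ k"
      by (simp add: U_def m_def rdiag_def matrix_matrix_mult_def if_distrib[where f="\<lambda>x. _ * x"]
          sum.delta' cong: if_cong)
    finally show ?thesis .
  qed
  hence "A ** U = U ** rdiag m" by (simp add: vec_eq_iff)
  hence "A = U ** rdiag m ** adj U"
    using unitary_mult_adj[OF \<open>unitary U\<close>] by (metis matrix_mul_assoc matrix_mul_rid)
  thus ?thesis using \<open>unitary U\<close> by blast
qed

text \<open>Flipping the signs of the negative eigenvalues into the right factor gives a singular value
  decomposition.\<close>

lemma hermitian_svd:
  fixes A :: "complex^'d^'d"
  assumes "hermitian A"
  shows "\<exists>U V s. unitary U \<and> unitary V \<and> (\<forall>i. 0 \<le> s $ i) \<and> A = U ** rdiag s ** adj V"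
proof -
  obtain U m where "unitary U" and A: "A = U ** rdiag m ** adj U"
    using hermitian_spectral_decomposition[OF assms] by blast
  define sg :: "real^'d" where "sg = (\<chi> i. if 0 \<le> m $ i then 1 else -1)"
  define s :: "real^'d" where "s = (\<chi> i. \<bar>m $ i\<bar>)"
  define V where "V = U ** rdiag sg"
  have sgsg: "sg * sg = 1" and ssg: "s * sg = m" by (simp_all add: vec_eq_iff sg_def s_def)
  have "adj V ** V = rdiag sg ** (adj U ** U) ** rdiag sg"
    by (simp add: V_def adj_mult matrix_mul_assoc)
  also have "\<dots> = mat 1"
    using \<open>unitary U\<close> by (simp add: unitary_def rdiag_mult sgsg rdiag_1)
  finally have "unitary V" by (simp add: unitary_def)
  have "U ** rdiag s ** adj V = U ** (rdiag s ** rdiag sg) ** adj U"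
    by (simp add: V_def adj_mult matrix_mul_assoc)
  also have "\<dots> = A" by (simp add: rdiag_mult ssg A)
  finally show ?thesis using \<open>unitary U\<close> \<open>unitary V\<close> by (metis s_def abs_ge_zero vec_lambda_beta)
qed

lemma trace_norm_hermitian:
  fixes A :: "complex^'d^'d"
  assumes "hermitian A"
  obtains U V s where "unitary U" "unitary V" "\<forall>i. 0 \<le> s $ i" "A = U ** rdiag s ** adj V"
    "trace_norm A = (\<Sum>i\<in>UNIV. s $ i)"
proof -
  have "\<exists>t U V s. unitary U \<and> unitary V \<and> (\<forall>i. 0 \<le> s $ i) \<and> A = U ** rdiag s ** adj V
      \<and> t = (\<Sum>i\<in>UNIV. s $ i)"
    using hermitian_svd[OF assms] by blast
  from someI_ex[OF this] show ?thesis using that unfolding trace_norm_def by blast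
qed

section \<open>Trace norm bounds\<close>

lemma mtrace_mult_commute: "mtrace (A ** B) = mtrace (B ** A)"
proof -
  have "mtrace (A ** B) = (\<Sum>i\<in>UNIV. \<Sum>k\<in>UNIV. A $ i $ k * B $ k $ i)"
    unfolding mtrace_def matrix_matrix_mult_def by simp
  also have "\<dots> = (\<Sum>k\<in>UNIV. \<Sum>i\<in>UNIV. A $ i $ k * B $ k $ i)" by (rule sum.swap)
  also have "\<dots> = mtrace (B ** A)"
    unfolding mtrace_def matrix_matrix_mult_def by (simp add: mult.commute)
  finally show ?thesis .
qed

lemma mtrace_sandwich_columns:
  "mtrace (adj U ** M ** V) = (\<Sum>k\<in>UNIV. cinner (column k U) (M *v column k V))"
proof -
  have "mtrace (adj U ** M ** V)
      = (\<Sum>k\<in>UNIV. \<Sum>j\<in>UNIV. (\<Sum>i\<in>UNIV. cnj (U $ i $ k) * M $ i $ j) * V $ j $ k)"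
    unfolding mtrace_def matrix_matrix_mult_def adj_def by simp
  also have "\<dots> = (\<Sum>k\<in>UNIV. \<Sum>i\<in>UNIV. \<Sum>j\<in>UNIV. cnj (U $ i $ k) * M $ i $ j * V $ j $ k)"
    by (simp add: sum_distrib_right) (intro sum.cong refl sum.swap)
  also have "\<dots> = (\<Sum>k\<in>UNIV. cinner (column k U) (M *v column k V))"
    unfolding cinner_def matrix_vector_mult_def column_def by (simp add: sum_distrib_left mult_ac)
  finally show ?thesis .
qed

lemma mtrace_sandwich_diff:
  "mtrace (adj U ** (M - N) ** V) = mtrace (adj U ** M ** V) - mtrace (adj U ** N ** V)"
  by (simp add: mtrace_sandwich_columns matrix_vector_mult_diff_rdistrib cinner_diff_right sum_subtractf)

lemma mtrace_sandwich_scaleR: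
  "mtrace (adj U ** (r *\<^sub>R M) ** V) = of_real r * mtrace (adj U ** M ** V)"
  by (simp add: mtrace_sandwich_columns scaleR_cmatrix_vector_mult cinner_scaleR_right sum_distrib_left)

lemma mtrace_unitary_conj:
  assumes "unitary U"
  shows "mtrace (adj U ** M ** U) = mtrace M"
proof -
  have "mtrace (adj U ** M ** U) = mtrace (U ** (adj U ** M))" by (rule mtrace_mult_commute)
  also have "\<dots> = mtrace M" using unitary_mult_adj[OF assms] by (simp add: matrix_mul_assoc)
  finally show ?thesis .
qed

lemma unitary_column_norm: "unitary U \<Longrightarrow> (\<Sum>i\<in>UNIV. (cmod (U $ i $ k))\<^sup>2) = 1"
proof -
  assume "unitary U"
  hence "(adj U ** U) $ k $ k = 1" by (simp add: unitary_def mat_def)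
  hence "cinner (column k U) (column k U) = 1"
    by (simp add: adj_def matrix_matrix_mult_def cinner_def column_def)
  hence "(norm (column k U))\<^sup>2 = 1" by (metis cinner_self of_real_eq_1_iff)
  thus ?thesis by (simp add: norm_vec_def L2_set_def column_def sum_nonneg)
qed

text \<open>Each diagonal entry of \<open>U diag(s) V\<^sup>*\<close> is bounded via \<open>|u v| \<le> (|u|\<^sup>2 + |v|\<^sup>2) / 2\<close>;
  summing over the diagonal uses up the unit norms of the columns.\<close>

lemma svd_sum_cmod_diag_le:
  assumes "unitary U" and "unitary V" and s: "\<forall>i. 0 \<le> s $ i" and A: "A = U ** rdiag s ** adj V"
  shows "(\<Sum>i\<in>UNIV. cmod (A $ i $ i)) \<le> (\<Sum>k\<in>UNIV. s $ k)"
proof -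
  have amgm: "x * y \<le> (x\<^sup>2 + y\<^sup>2) / 2" for x y :: real
    using sum_squares_bound[of x y] by simp
  define b where "b i k = s $ k * ((cmod (U $ i $ k))\<^sup>2 + (cmod (V $ i $ k))\<^sup>2) / 2" for i k
  have "cmod (A $ i $ i) \<le> (\<Sum>k\<in>UNIV. b i k)" for i
  proof -
    have "A $ i $ i = (\<Sum>k\<in>UNIV. U $ i $ k * of_real (s $ k) * cnj (V $ i $ k))"
      by (simp add: A matrix_matrix_mult_def rdiag_def adj_def if_distrib[where f="\<lambda>x. _ * x"]
          sum.delta' cong: if_cong)
    hence "cmod (A $ i $ i) \<le> (\<Sum>k\<in>UNIV. s $ k * (cmod (U $ i $ k) * cmod (V $ i $ k)))"
      using norm_sum[of "\<lambda>k. U $ i $ k * of_real (s $ k) * cnj (V $ i $ k)" UNIV] s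
      by (simp add: norm_mult mult_ac)
    also have "\<dots> \<le> (\<Sum>k\<in>UNIV. b i k)"
      unfolding b_def times_divide_eq_right[symmetric]
      using s amgm by (intro sum_mono mult_left_mono) auto
    finally show ?thesis .
  qed
  hence "(\<Sum>i\<in>UNIV. cmod (A $ i $ i)) \<le> (\<Sum>i\<in>UNIV. \<Sum>k\<in>UNIV. b i k)"
    by (rule sum_mono)
  also have "\<dots> = (\<Sum>k\<in>UNIV. \<Sum>i\<in>UNIV. b i k)" by (rule sum.swap)
  also have "\<dots> = (\<Sum>k\<in>UNIV. s $ k * ((\<Sum>i\<in>UNIV. (cmod (U $ i $ k))\<^sup>2)
      + (\<Sum>i\<in>UNIV. (cmod (V $ i $ k))\<^sup>2)) / 2)"
    unfolding b_def
    by (simp add: sum_distrib_left sum.distrib distrib_left flip: sum_divide_distrib)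
  also have "\<dots> = (\<Sum>k\<in>UNIV. s $ k)"
    by (simp add: unitary_column_norm[OF \<open>unitary U\<close>] unitary_column_norm[OF \<open>unitary V\<close>])
  finally show ?thesis .
qed

lemma sum_cmod_diag_le_trace_norm:
  "hermitian A \<Longrightarrow> (\<Sum>i\<in>UNIV. cmod (A $ i $ i)) \<le> trace_norm A"
proof -
  assume "hermitian A"
  then obtain U V s where svd: "unitary U" "unitary V" "\<forall>i. 0 \<le> s $ i" "A = U ** rdiag s ** adj V"
    and "trace_norm A = (\<Sum>i\<in>UNIV. s $ i)"
    by (rule trace_norm_hermitian)
  thus ?thesis using svd_sum_cmod_diag_le[OF svd] by simp
qed

lemma trace_norm_hermitian_eq_mtrace:
  assumes "hermitian A"
  obtains U V where "unitary U" "unitary V" "of_real (trace_norm A) = mtrace (adj U ** A ** V)"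
proof -
  obtain U V s where "unitary U" "unitary V" and A: "A = U ** rdiag s ** adj V"
    and "trace_norm A = (\<Sum>i\<in>UNIV. s $ i)"
    using trace_norm_hermitian[OF assms] .
  moreover have "adj U ** A ** V = (adj U ** U) ** rdiag s ** (adj V ** V)"
    by (simp add: A matrix_mul_assoc)
  hence "adj U ** A ** V = rdiag s"
    using \<open>unitary U\<close> \<open>unitary V\<close> by (simp add: unitary_def)
  ultimately show ?thesis using that by (simp add: mtrace_def rdiag_def)
qed

lemma psd_cinner: "psd A \<Longrightarrow> Im (cinner x (A *v x)) = 0 \<and> 0 \<le> Re (cinner x (A *v x))"
  unfolding psd_def cinner_def Let_def by blast

lemma le_mult_if_quadratic_nonneg:
  fixes a b w :: real
  assumes "0 \<le> a" and "0 \<le> b" and "0 \<le> w" and nonneg: "\<And>t. 0 \<le> a - 2 * t * w + t\<^sup>2 * w * b"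
  shows "w \<le> a * b"
proof (cases "b = 0")
  case True
  have "0 \<le> a - 2 * ((a + 1) / (2 * w)) * w" using nonneg[of "(a + 1) / (2 * w)"] True by simp
  thus ?thesis using True assms(1,3) by (cases "w = 0") (simp_all add: field_simps)
next
  case False
  hence "b > 0" using assms(2) by simp
  have "0 \<le> a - 2 * (1 / b) * w + (1 / b)\<^sup>2 * w * b" by (rule nonneg)
  also have "\<dots> = a - w / b" using \<open>b > 0\<close> by (simp add: field_simps power2_eq_square)
  finally show ?thesis using \<open>b > 0\<close> by (simp add: field_simps mult.commute)
qed

lemma psd_cauchy_schwarz:
  assumes psd: "psd A"
  shows "(cmod (cinner x (A *v y)))\<^sup>2 \<le> Re (cinner x (A *v x)) * Re (cinner y (A *v y))"
proof -
  have herm: "hermitian A" using psd by (simp add: psd_def)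
  define w where "w = cinner x (A *v y)"
  define W where "W = (cmod w)\<^sup>2"
  have ww: "cnj w * w = of_real W" unfolding W_def by (metis complex_norm_square mult.commute of_real_power)
  have yx: "cinner y (A *v x) = cnj w"
    using cinner_hermitian[OF herm, of y x] cinner_commute[of "A *v y" x] by (simp add: w_def)
  have "0 \<le> Re (cinner x (A *v x)) - 2 * t * W + t\<^sup>2 * W * Re (cinner y (A *v y))"
    for t
  proof -
    define c where "c = - (of_real t * cnj w)"
    define z where "z = x + c *s y"
    have "cinner z (A *v z)
        = cinner x (A *v x) + c * w + cnj c * cnj w + cnj c * c * cinner y (A *v y)"
      by (simp add: z_def matrix_vector_right_distrib vector_scalar_commute cinner_add_left
          cinner_add_right cinner_scaleC_left cinner_scaleC_right w_def[symmetric] yx algebra_simps)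
    also have "\<dots> = cinner x (A *v x) - of_real (2 * t * W) + of_real (t\<^sup>2 * W) * cinner y (A *v y)"
    proof -
      have "c * w = - of_real (t * W)" and "cnj c * cnj w = - of_real (t * W)"
        and "cnj c * c = of_real (t\<^sup>2 * W)"
        using ww by (simp_all add: c_def algebra_simps power2_eq_square)
      thus ?thesis by simp
    qed
    finally show ?thesis using psd_cinner[OF psd, of z] by simp
  qed
  hence "W \<le> Re (cinner x (A *v x)) * Re (cinner y (A *v y))"
    using psd_cinner[OF psd] by (intro le_mult_if_quadratic_nonneg) (auto simp: W_def)
  thus ?thesis by (simp add: W_def w_def)
qed

lemma cinner_sandwich: "cinner (B *v x) (M *v (B *v y)) = cinner x ((adj B ** M ** B) *v y)"
  using cinner_adj[of x "adj B" "M *v (B *v y)"] by (simp add: matrix_vector_mul_assoc matrix_mul_assoc)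

lemma sum_cinner_columns_eq_mtrace:
  "unitary U \<Longrightarrow> (\<Sum>k\<in>UNIV. cinner (column k U) (M *v column k U)) = mtrace M"
  by (simp add: mtrace_unitary_conj flip: mtrace_sandwich_columns)

text \<open>Cauchy--Schwarz twice: for the positive form of \<open>\<rho>\<close> on each pair of columns, then for the sum
  over the columns.\<close>

lemma cmod_mtrace_sandwich_le:
  assumes psd: "psd \<rho>" and "unitary U" and "unitary V"
  shows "cmod (mtrace (adj U ** (X ** \<rho> ** Y) ** V))
         \<le> sqrt (Re (mtrace (X ** \<rho> ** adj X))) * sqrt (Re (mtrace (adj Y ** \<rho> ** Y)))"
proof -
  define a where "a k = adj X *v column k U" for k
  define b where "b k = Y *v column k V" for k
  define \<alpha> where "\<alpha> k = Re (cinner (a k) (\<rho> *v a k))" for k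
  define \<beta> where "\<beta> k = Re (cinner (b k) (\<rho> *v b k))" for k
  have "mtrace (adj U ** (X ** \<rho> ** Y) ** V) = (\<Sum>k\<in>UNIV. cinner (a k) (\<rho> *v b k))"
    by (simp add: mtrace_sandwich_columns a_def b_def cinner_adj[symmetric]
        matrix_vector_mul_assoc[symmetric])
  hence "cmod (mtrace (adj U ** (X ** \<rho> ** Y) ** V)) \<le> (\<Sum>k\<in>UNIV. cmod (cinner (a k) (\<rho> *v b k)))"
    by (simp add: norm_sum)
  also have "\<dots> \<le> (\<Sum>k\<in>UNIV. sqrt (\<alpha> k) * sqrt (\<beta> k))"
    unfolding \<alpha>_def \<beta>_def
    by (intro sum_mono) (metis psd_cauchy_schwarz[OF psd] real_sqrt_le_mono real_sqrt_mult real_sqrt_abs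
        abs_norm_cancel)
  also have "\<dots> \<le> sqrt (sum \<alpha> UNIV) * sqrt (sum \<beta> UNIV)"
  proof -
    have "0 \<le> \<alpha> k" "0 \<le> \<beta> k" for k using psd_cinner[OF psd] by (simp_all add: \<alpha>_def \<beta>_def)
    hence "(\<Sum>k\<in>UNIV. sqrt (\<alpha> k) * sqrt (\<beta> k))\<^sup>2 \<le> sum \<alpha> UNIV * sum \<beta> UNIV"
      using Cauchy_Schwarz_ineq_sum[of "\<lambda>k. sqrt (\<alpha> k)" "\<lambda>k. sqrt (\<beta> k)" UNIV] by simp
    thus ?thesis by (metis real_le_rsqrt real_sqrt_mult)
  qed
  also have "sum \<alpha> UNIV = Re (mtrace (X ** \<rho> ** adj X))"
    using sum_cinner_columns_eq_mtrace[OF \<open>unitary U\<close>, of "X ** \<rho> ** adj X"]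
    by (simp add: \<alpha>_def a_def cinner_sandwich flip: Re_sum)
  also have "sum \<beta> UNIV = Re (mtrace (adj Y ** \<rho> ** Y))"
    using sum_cinner_columns_eq_mtrace[OF \<open>unitary V\<close>, of "adj Y ** \<rho> ** Y"]
    by (simp add: \<beta>_def b_def cinner_sandwich flip: Re_sum)
  finally show ?thesis .
qed

section \<open>Projective measurement in the computational basis\<close>

lemma matrix_mult_proj_nth: "(M ** proj I) $ i $ j = (if j \<in> I then M $ i $ j else 0)"
proof -
  have "(M ** proj I) $ i $ j = (\<Sum>k\<in>UNIV. M $ i $ k * (if k = j \<and> k \<in> I then 1 else 0))"
    by (simp add: matrix_matrix_mult_def proj_def)
  also have "\<dots> = (\<Sum>k\<in>UNIV. if k = j then (if j \<in> I then M $ i $ j else 0) else 0)"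
    by (rule sum.cong) auto
  finally show ?thesis by simp
qed

lemma proj_matrix_mult_nth: "(proj I ** M) $ i $ j = (if i \<in> I then M $ i $ j else 0)"
proof -
  have "(proj I ** M) $ i $ j = (\<Sum>k\<in>UNIV. (if i = k \<and> i \<in> I then 1 else 0) * M $ k $ j)"
    by (simp add: matrix_matrix_mult_def proj_def)
  also have "\<dots> = (\<Sum>k\<in>UNIV. if k = i then (if i \<in> I then M $ i $ j else 0) else 0)"
    by (rule sum.cong) auto
  finally show ?thesis by simp
qed

lemma adj_proj [simp]: "adj (proj I) = proj I"
  by (simp add: vec_eq_iff adj_def proj_def)

lemma proj_mult_proj [simp]: "proj I ** proj I = proj I"
  by (simp add: vec_eq_iff matrix_mult_proj_nth) (simp add: proj_def)

lemma proj_add_proj_Compl: "proj I + proj (- I) = mat 1"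
  by (simp add: vec_eq_iff proj_def mat_def)

lemma mtrace_mult_proj: "mtrace (M ** proj I) = (\<Sum>i\<in>I. M $ i $ i)"
  by (simp add: mtrace_def matrix_mult_proj_nth sum.If_cases)

lemma mtrace_proj_sandwich: "mtrace (proj J ** M ** proj J) = mtrace (M ** proj J)"
  by (metis mtrace_mult_commute matrix_mul_assoc proj_mult_proj)

lemma density_diag:
  assumes "density \<rho>"
  shows "\<rho> $ i $ i = of_real (diagv \<rho> $ i)" and "0 \<le> diagv \<rho> $ i"
proof -
  have "cinner (axis i 1) (\<rho> *v axis i 1) = (\<Sum>k\<in>UNIV. if k = i then \<rho> $ i $ i else 0)"
    unfolding cinner_def axis_def matrix_vector_mult_def
    by (intro sum.cong) (auto simp: if_distrib[where f="\<lambda>x. _ * x"] sum.delta' cong: if_cong)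
  hence "cinner (axis i 1) (\<rho> *v axis i 1) = \<rho> $ i $ i" by simp
  moreover have "psd \<rho>" using assms by (simp add: density_def)
  ultimately show "\<rho> $ i $ i = of_real (diagv \<rho> $ i)" and "0 \<le> diagv \<rho> $ i"
    using psd_cinner[of \<rho> "axis i 1"] by (simp_all add: diagv_def complex_eq_iff)
qed

lemma density_mtrace_mult_proj:
  "density \<rho> \<Longrightarrow> mtrace (\<rho> ** proj J) = of_real (\<Sum>i\<in>J. diagv \<rho> $ i)"
  by (simp add: mtrace_mult_proj density_diag(1))

lemma density_sum_diag: "density \<rho> \<Longrightarrow> (\<Sum>i\<in>UNIV. diagv \<rho> $ i) = 1"
  using density_mtrace_mult_proj[of \<rho> UNIV]
  by (simp add: density_def proj_def mat_def[symmetric]) (metis of_real_eq_1_iff of_real_sum)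

lemma density_sum_diag_le_1: "density \<rho> \<Longrightarrow> (\<Sum>i\<in>J. diagv \<rho> $ i) \<le> 1"
  by (metis density_sum_diag density_diag(2) sum_mono2 finite subset_UNIV)

definition post_meas :: "complex^'d^'d \<Rightarrow> 'd set \<Rightarrow> complex^'d^'d" where
  "post_meas \<rho> I = (\<chi> i j. (proj I ** \<rho> ** proj I) $ i $ j / mtrace (\<rho> ** proj I))"

definition cond_dist :: "real^'d \<Rightarrow> 'd set \<Rightarrow> real^'d" where
  "cond_dist p I = (\<chi> i. if i \<in> I then p $ i / (\<Sum>k\<in>I. p $ k) else 0)"

lemma post_meas_eq_scaleR:
  "density \<rho> \<Longrightarrow> post_meas \<rho> I = (1 / (\<Sum>i\<in>I. diagv \<rho> $ i)) *\<^sub>R (proj I ** \<rho> ** proj I)"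
  by (simp add: post_meas_def vec_eq_iff density_mtrace_mult_proj scaleR_conv_of_real[where 'a=complex]
      divide_inverse mult.commute)

lemma hermitian_post_meas_diff:
  assumes "density \<rho>"
  shows "hermitian (post_meas \<rho> I - \<rho>)"
proof -
  have "adj \<rho> = \<rho>" using assms by (simp add: density_def psd_def hermitian_def)
  thus ?thesis
    by (simp add: hermitian_def post_meas_eq_scaleR[OF assms] adj_diff adj_scaleR adj_mult matrix_mul_assoc)
qed

lemma diagv_post_meas: "density \<rho> \<Longrightarrow> diagv (post_meas \<rho> I) = cond_dist (diagv \<rho>) I"
  by (simp add: vec_eq_iff post_meas_def cond_dist_def density_mtrace_mult_proj diagv_def
      proj_matrix_mult_nth matrix_mult_proj_nth Re_divide_of_real)

lemma cmod_mtrace_sandwich_proj_le: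
  assumes "density \<rho>" and "unitary U" and "unitary V"
  shows "cmod (mtrace (adj U ** (proj J ** \<rho> ** proj K) ** V))
    \<le> sqrt (\<Sum>i\<in>J. diagv \<rho> $ i) * sqrt (\<Sum>i\<in>K. diagv \<rho> $ i)"
  using cmod_mtrace_sandwich_le[of \<rho> U V "proj J" "proj K"] assms
  by (simp add: density_def mtrace_proj_sandwich density_mtrace_mult_proj)

lemma post_meas_diff_blocks:
  assumes "density \<rho>" and "t = (\<Sum>i\<in>I. diagv \<rho> $ i)"
  defines "P \<equiv> proj I" and "Q \<equiv> proj (- I)"
  shows "post_meas \<rho> I - \<rho>
    = (1 / t - 1) *\<^sub>R (P ** \<rho> ** P) - P ** \<rho> ** Q - Q ** \<rho> ** P - Q ** \<rho> ** Q"
proof -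
  have "\<rho> = (P + Q) ** \<rho> ** (P + Q)" by (simp add: P_def Q_def proj_add_proj_Compl)
  hence "\<rho> = P ** \<rho> ** P + P ** \<rho> ** Q + Q ** \<rho> ** P + Q ** \<rho> ** Q"
    by (simp add: matrix_add_ldistrib matrix_add_rdistrib add_ac)
  moreover have "post_meas \<rho> I = (1 / t) *\<^sub>R (P ** \<rho> ** P)"
    using post_meas_eq_scaleR[OF assms(1)] by (simp add: assms(2) P_def)
  ultimately show ?thesis by (simp add: algebra_simps)
qed

lemma trace_norm_post_meas_diff_le:
  assumes dens: "density \<rho>" and t_def: "t = (\<Sum>i\<in>I. diagv \<rho> $ i)" and "0 < t"
  shows "trace_norm (post_meas \<rho> I - \<rho>) \<le> min 2 (2 * (1 - t) + 2 * (sqrt t * sqrt (1 - t)))"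
proof -
  define P where "P = proj I"
  define Q where "Q = proj (- I)"
  have sum_Compl: "(\<Sum>i\<in>-I. diagv \<rho> $ i) = 1 - t"
    using density_sum_diag[OF dens] sum.subset_diff[of I UNIV "\<lambda>i. diagv \<rho> $ i"]
    by (simp add: t_def Compl_eq_Diff_UNIV)
  have "t \<le> 1" using density_sum_diag_le_1[OF dens] by (simp add: t_def)
  obtain U V where U: "unitary U" and V: "unitary V"
    and tn: "of_real (trace_norm (post_meas \<rho> I - \<rho>)) = mtrace (adj U ** (post_meas \<rho> I - \<rho>) ** V)"
    using trace_norm_hermitian_eq_mtrace[OF hermitian_post_meas_diff[OF dens]] .
  define L where "L M = mtrace (adj U ** M ** V)" for M
  have bound: "cmod (L (proj J ** \<rho> ** proj K))
      \<le> sqrt (\<Sum>i\<in>J. diagv \<rho> $ i) * sqrt (\<Sum>i\<in>K. diagv \<rho> $ i)" for J K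
    unfolding L_def by (rule cmod_mtrace_sandwich_proj_le[OF dens U V])
  have LP: "cmod (L (P ** \<rho> ** P)) \<le> t" using bound[of I I] \<open>0 < t\<close> by (simp add: P_def t_def)
  have LPQ: "cmod (L (P ** \<rho> ** Q)) \<le> sqrt t * sqrt (1 - t)"
    and LQP: "cmod (L (Q ** \<rho> ** P)) \<le> sqrt t * sqrt (1 - t)"
    using bound[of I "- I"] bound[of "- I" I] sum_Compl by (simp_all add: P_def Q_def t_def mult.commute)
  have LQ: "cmod (L (Q ** \<rho> ** Q)) \<le> 1 - t"
    using bound[of "- I" "- I"] sum_Compl \<open>t \<le> 1\<close> by (simp add: Q_def)
  have Lrho: "cmod (L \<rho>) \<le> 1"
    using bound[of UNIV UNIV] density_sum_diag[OF dens] by (simp add: proj_def mat_def[symmetric])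
  have "L (post_meas \<rho> I - \<rho>) = of_real (1 / t - 1) * L (P ** \<rho> ** P)
      - L (P ** \<rho> ** Q) - L (Q ** \<rho> ** P) - L (Q ** \<rho> ** Q)"
    unfolding post_meas_diff_blocks[OF dens t_def] L_def P_def Q_def
    by (simp add: mtrace_sandwich_diff mtrace_sandwich_scaleR)
  moreover have "cmod (of_real (1 / t - 1) * L (P ** \<rho> ** P)) \<le> 1 - t"
  proof -
    have "cmod (of_real (1 / t - 1) * L (P ** \<rho> ** P)) = (1 / t - 1) * cmod (L (P ** \<rho> ** P))"
      unfolding norm_mult norm_of_real using \<open>0 < t\<close> \<open>t \<le> 1\<close> by simp
    also have "\<dots> \<le> (1 / t - 1) * t"
      using LP \<open>0 < t\<close> \<open>t \<le> 1\<close> by (intro mult_left_mono) simp_all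
    also have "\<dots> = 1 - t" using \<open>0 < t\<close> by (simp add: field_simps)
    finally show ?thesis .
  qed
  moreover have "cmod (a - b - c - d) \<le> cmod a + cmod b + cmod c + cmod d" for a b c d :: complex
    using norm_triangle_ineq4[of "a - b - c" d] norm_triangle_ineq4[of "a - b" c]
      norm_triangle_ineq4[of a b] by linarith
  ultimately have "cmod (L (post_meas \<rho> I - \<rho>)) \<le> 2 * (1 - t) + 2 * (sqrt t * sqrt (1 - t))"
    using LPQ LQP LQ by (smt (verit))
  moreover have "L (post_meas \<rho> I - \<rho>) = of_real (1 / t) * L (P ** \<rho> ** P) - L \<rho>"
    by (simp add: L_def post_meas_eq_scaleR[OF dens] mtrace_sandwich_diff mtrace_sandwich_scaleR
        P_def t_def)
  moreover have "cmod (of_real (1 / t) * L (P ** \<rho> ** P)) \<le> 1"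
    unfolding norm_mult norm_of_real using LP \<open>0 < t\<close> by (simp add: field_simps)
  ultimately have "cmod (L (post_meas \<rho> I - \<rho>)) \<le> min 2 (2 * (1 - t) + 2 * (sqrt t * sqrt (1 - t)))"
    using Lrho norm_triangle_ineq4[of "of_real (1 / t) * L (P ** \<rho> ** P)" "L \<rho>"] by simp
  moreover have "trace_norm (post_meas \<rho> I - \<rho>) \<le> cmod (L (post_meas \<rho> I - \<rho>))"
    using tn unfolding L_def by (metis Re_complex_of_real complex_Re_le_cmod)
  ultimately show ?thesis by linarith
qed

lemma gentle_measurement_bound_le:
  fixes t e :: real
  assumes "0 < t" and "t \<le> 1" and "0 < e" and "8 * (1 - t) \<le> e\<^sup>2"
  shows "min 2 (2 * (1 - t) + 2 * (sqrt t * sqrt (1 - t))) \<le> e"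
proof (cases "e < 2")
  case True
  define s where "s = 1 - t"
  have "0 \<le> s" and "8 * s \<le> e\<^sup>2" using assms by (auto simp: s_def)
  have "e\<^sup>2 < 2 * e" using \<open>0 < e\<close> True by (simp add: power2_eq_square)
  hence "0 \<le> (s - e\<^sup>2 / 8) * (8 * s + e\<^sup>2 - 4 * (e + 1))"
    using \<open>8 * s \<le> e\<^sup>2\<close> by (intro mult_nonpos_nonpos) simp_all
  moreover have "(e - 2 * s)\<^sup>2 - 4 * (s * (1 - s))
      = (s - e\<^sup>2 / 8) * (8 * s + e\<^sup>2 - 4 * (e + 1)) + e\<^sup>2 * (e - 2)\<^sup>2 / 8"
    by (simp add: field_simps power2_eq_square)
  ultimately have "4 * (s * (1 - s)) \<le> (e - 2 * s)\<^sup>2"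
    by (smt (verit) zero_le_power2 divide_nonneg_pos mult_nonneg_nonneg)
  moreover have "0 \<le> e - 2 * s"
    using \<open>8 * s \<le> e\<^sup>2\<close> \<open>e\<^sup>2 < 2 * e\<close> \<open>0 < e\<close> by linarith
  ultimately have "sqrt (4 * (s * (1 - s))) \<le> e - 2 * s"
    by (metis real_sqrt_le_mono real_sqrt_abs abs_of_nonneg)
  moreover have "sqrt (4 * (s * (1 - s))) = sqrt 4 * (sqrt s * sqrt (1 - s))"
    by (simp only: real_sqrt_mult)
  hence "sqrt (4 * (s * (1 - s))) = 2 * (sqrt t * sqrt s)"
    using real_sqrt_unique[of 2 4] by (simp add: s_def)
  ultimately show ?thesis by (simp add: s_def)
qed simp

lemma sum_abs_diff_cond_dist:
  fixes p :: "real^'d"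
  assumes nonneg: "\<And>i. 0 \<le> p $ i" and "(\<Sum>i\<in>UNIV. p $ i) = 1" and T_def: "T = (\<Sum>i\<in>I. p $ i)"
    and "0 < T"
  shows "(\<Sum>i\<in>UNIV. \<bar>cond_dist p I $ i - p $ i\<bar>) = 2 * (1 - T)"
proof -
  have "T \<le> 1"
    using assms(2) nonneg sum_mono2[of UNIV I "\<lambda>i. p $ i"] by (simp add: T_def)
  have "(\<Sum>i\<in>I. \<bar>cond_dist p I $ i - p $ i\<bar>) = (\<Sum>i\<in>I. p $ i * (1 / T - 1))"
  proof (rule sum.cong)
    fix i assume "i \<in> I"
    hence "cond_dist p I $ i - p $ i = p $ i * (1 / T - 1)"
      by (simp add: cond_dist_def T_def algebra_simps)
    moreover have "0 \<le> p $ i * (1 / T - 1)"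
      using nonneg[of i] \<open>0 < T\<close> \<open>T \<le> 1\<close> by simp
    ultimately show "\<bar>cond_dist p I $ i - p $ i\<bar> = p $ i * (1 / T - 1)" by simp
  qed simp
  also have "\<dots> = T * (1 / T - 1)" by (simp add: T_def sum_distrib_right)
  also have "\<dots> = 1 - T" using \<open>0 < T\<close> by (simp add: field_simps)
  finally have "(\<Sum>i\<in>I. \<bar>cond_dist p I $ i - p $ i\<bar>) = 1 - T" .
  moreover have "(\<Sum>i\<in>-I. \<bar>cond_dist p I $ i - p $ i\<bar>) = 1 - T"
    using assms(2) sum.subset_diff[of I UNIV "\<lambda>i. p $ i"] nonneg
    by (simp add: cond_dist_def T_def Compl_eq_Diff_UNIV)
  ultimately show ?thesis
    using sum.subset_diff[of I UNIV "\<lambda>i. \<bar>cond_dist p I $ i - p $ i\<bar>"] by (simp add: Compl_eq_Diff_UNIV)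
qed

section \<open>Comparing the quantum and classical sets\<close>

lemma Vq_eq:
  "Vq eps \<rho> = post_meas \<rho> ` {I. 0 < Re (mtrace (\<rho> ** proj I))} \<inter> {\<sigma>. trace_norm (\<sigma> - \<rho>) \<le> eps}"
  by (auto simp: Vq_def post_meas_def)

lemma Vc_eq:
  "Vc eps p = cond_dist p ` {I. 0 < (\<Sum>i\<in>I. p $ i)} \<inter> {q. (\<Sum>i\<in>UNIV. \<bar>q $ i - p $ i\<bar>) \<le> eps}"
  by (auto simp: Vc_def cond_dist_def)

lemma diagv_Vq_subset_Vc:
  assumes "density \<rho>"
  shows "diagv ` Vq eps \<rho> \<subseteq> Vc eps (diagv \<rho>)"
proof
  fix q assume "q \<in> diagv ` Vq eps \<rho>"
  then obtain I where I: "0 < (\<Sum>i\<in>I. diagv \<rho> $ i)" and q: "q = diagv (post_meas \<rho> I)"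
    and tn: "trace_norm (post_meas \<rho> I - \<rho>) \<le> eps"
    by (auto simp: Vq_eq density_mtrace_mult_proj[OF assms])
  have "(\<Sum>i\<in>UNIV. \<bar>q $ i - diagv \<rho> $ i\<bar>) \<le> (\<Sum>i\<in>UNIV. cmod ((post_meas \<rho> I - \<rho>) $ i $ i))"
    by (intro sum_mono) (simp add: q diagv_def abs_Re_le_cmod flip: minus_complex.sel)
  also have "\<dots> \<le> eps"
    using sum_cmod_diag_le_trace_norm[OF hermitian_post_meas_diff[OF assms, of I]] tn by linarith
  finally show "q \<in> Vc eps (diagv \<rho>)"
    using I by (auto simp: Vc_eq q diagv_post_meas[OF assms])
qed

lemma Vc_subset_diagv_Vq:
  assumes "density \<rho>" and "0 < eps"
  shows "Vc (eps\<^sup>2 / 4) (diagv \<rho>) \<subseteq> diagv ` Vq eps \<rho>"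
proof
  fix q assume "q \<in> Vc (eps\<^sup>2 / 4) (diagv \<rho>)"
  then obtain I where I: "0 < (\<Sum>i\<in>I. diagv \<rho> $ i)" and q: "q = cond_dist (diagv \<rho>) I"
    and dist: "(\<Sum>i\<in>UNIV. \<bar>q $ i - diagv \<rho> $ i\<bar>) \<le> eps\<^sup>2 / 4"
    by (auto simp: Vc_eq)
  define t where "t = (\<Sum>i\<in>I. diagv \<rho> $ i)"
  have "8 * (1 - t) \<le> eps\<^sup>2"
    using dist sum_abs_diff_cond_dist[OF density_diag(2)[OF assms(1)] density_sum_diag[OF assms(1)] t_def]
      I by (simp add: q t_def)
  hence "min 2 (2 * (1 - t) + 2 * (sqrt t * sqrt (1 - t))) \<le> eps"
    using gentle_measurement_bound_le density_sum_diag_le_1[OF assms(1)] I assms(2) by (simp add: t_def)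
  hence "trace_norm (post_meas \<rho> I - \<rho>) \<le> eps"
    using trace_norm_post_meas_diff_le[OF assms(1) t_def] I unfolding t_def by linarith
  hence "post_meas \<rho> I \<in> Vq eps \<rho>"
    using I by (simp add: Vq_eq density_mtrace_mult_proj[OF assms(1)])
  thus "q \<in> diagv ` Vq eps \<rho>"
    using diagv_post_meas[OF assms(1), of I] q by (metis image_eqI)
qed

lemma diagv_mem_Vc: "density \<rho> \<Longrightarrow> 0 \<le> e \<Longrightarrow> diagv \<rho> \<in> Vc e (diagv \<rho>)"
  by (auto simp: Vc_def density_sum_diag intro!: exI[of _ UNIV] simp: vec_eq_iff)

lemma finite_Vq: "finite (Vq eps \<rho>)"
  by (rule finite_subset[of _ "range (post_meas \<rho>)"]) (auto simp: Vq_eq)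

lemma finite_Vc: "finite (Vc eps p)"
  by (rule finite_subset[of _ "range (cond_dist p)"]) (auto simp: Vc_eq)

theorem lemma9:
  fixes \<rho> :: "complex^'d^'d" and eps :: real and f :: "real^'d \<Rightarrow> real"
  assumes "density \<rho>" and "0 < eps"
  shows "Min (f ` Vc eps (diagv \<rho>)) \<le> Min ((\<lambda>\<sigma>. f (diagv \<sigma>)) ` Vq eps \<rho>)
       \<and> Min ((\<lambda>\<sigma>. f (diagv \<sigma>)) ` Vq eps \<rho>) \<le> Min (f ` Vc (eps\<^sup>2 / 4) (diagv \<rho>))"
proof -
  have img: "(\<lambda>\<sigma>. f (diagv \<sigma>)) ` Vq eps \<rho> = f ` diagv ` Vq eps \<rho>" by (simp add: image_image)
  have inner: "Vc (eps\<^sup>2 / 4) (diagv \<rho>) \<subseteq> diagv ` Vq eps \<rho>"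
    and outer: "diagv ` Vq eps \<rho> \<subseteq> Vc eps (diagv \<rho>)"
    using Vc_subset_diagv_Vq[OF assms] diagv_Vq_subset_Vc[OF assms(1)] .
  have "diagv \<rho> \<in> Vc (eps\<^sup>2 / 4) (diagv \<rho>)" by (simp add: diagv_mem_Vc[OF assms(1)])
  hence "Vc (eps\<^sup>2 / 4) (diagv \<rho>) \<noteq> {}" by blast
  hence "diagv ` Vq eps \<rho> \<noteq> {}" using inner by blast
  show ?thesis
    unfolding img
  proof
    show "Min (f ` Vc eps (diagv \<rho>)) \<le> Min (f ` diagv ` Vq eps \<rho>)"
      using \<open>diagv ` Vq eps \<rho> \<noteq> {}\<close> by (intro Min_antimono image_mono outer) (simp_all add: finite_Vc)
    show "Min (f ` diagv ` Vq eps \<rho>) \<le> Min (f ` Vc (eps\<^sup>2 / 4) (diagv \<rho>))"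
      using \<open>Vc (eps\<^sup>2 / 4) (diagv \<rho>) \<noteq> {}\<close> by (intro Min_antimono image_mono inner) (simp_all add: finite_Vq)
  qed
qed

end
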